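(* Let $n=n(\theta)$ be positive integers with $n\to\infty$ and $\theta/n\to0$ as $\theta\to\infty$. Let $K_n(\theta)$ be a random variable with $P\{K_n(\theta)=k\}=|S_n^k|\theta^k/\theta_{(n)}$, $k=1,\dots,n$, where $\theta_{(n)}=\theta(\theta+1)\cdots(\theta+n-1)$ and $|S_n^k|$ is the coefficient of $\theta^k$ in $\theta_{(n)}$. Then, as $\theta\to\infty$, the family of laws of $K_n(\theta)/(\theta\log\frac n\theta)$ satisfies an LDP on $[0,+\infty)$ with speed $\theta\log\frac n\theta$ and rate function $I(x)=x\log x-x+1$ (with $0\log0=0$).
   Context: $K_n(\theta)$ is the number of distinct alleles in a sample of size $n$ from a $PD(\theta)$ population. An LDP with speed $a(\theta)$ uses normalization $a(\theta)^{-1}\log$ as $\theta\to\infty$. *)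

theory Defs
  imports "HOL-Analysis.Analysis" "HOL-Combinatorics.Stirling"
begin

text \<open>Law of K_n(theta): P(K = k) = |S_n^k| theta^k / theta_(n), k = 1..n,
  where |S_n^k| = stirling n k (unsigned Stirling numbers of the first kind,
  the coefficient of theta^k in the rising factorial pochhammer theta n).\<close>
definition Kprob :: "real \<Rightarrow> nat \<Rightarrow> nat \<Rightarrow> real" where
  "Kprob \<theta> n k = real (stirling n k) * \<theta> ^ k / pochhammer \<theta> n"

definition Kscaled_prob :: "real \<Rightarrow> nat \<Rightarrow> real \<Rightarrow> real set \<Rightarrow> real" where
  "Kscaled_prob \<theta> n c A = (\<Sum>k\<in>{k\<in>{1..n}. real k / c \<in> A}. Kprob \<theta> n k)"

definition nlog :: "real \<Rightarrow> real \<Rightarrow> ereal" where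
  "nlog a p = (if p \<le> 0 then - \<infinity> else ereal (ln p / a))"

definition LDP_at_top ::
  "(real \<Rightarrow> real set \<Rightarrow> real) \<Rightarrow> (real \<Rightarrow> real) \<Rightarrow> (real \<Rightarrow> real) \<Rightarrow> real set \<Rightarrow> bool" where
  "LDP_at_top P a I E \<longleftrightarrow>
     (\<forall>x\<in>E. 0 \<le> I x) \<and>
     (\<forall>c. closedin (top_of_set E) {x\<in>E. I x \<le> c}) \<and>
     (\<forall>F. closedin (top_of_set E) F \<longrightarrow>
        Limsup at_top (\<lambda>\<theta>. nlog (a \<theta>) (P \<theta> F)) \<le> - (INF x\<in>F. ereal (I x))) \<and>
     (\<forall>G. openin (top_of_set E) G \<longrightarrow>
        - (INF x\<in>G. ereal (I x)) \<le> Liminf at_top (\<lambda>\<theta>. nlog (a \<theta>) (P \<theta> G)))"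

definition rateI :: "real \<Rightarrow> real" where
  "rateI x = (if x = 0 then 1 else x * ln x - x + 1)"

end

theory Submission
  imports Defs "HOL-Real_Asymp.Real_Asymp"
begin

text \<open>
  Everything is controlled by the generating function
  E c^K = (c\<theta>)_(n) / \<theta>_(n) = \<Prod>i<n. (1 + (c - 1) \<theta>/(\<theta> + i)).
  Its logarithm is (c - 1) m(\<theta>) up to an error of order \<Sum>i<n. (\<theta>/(\<theta> + i))^2 = O(\<theta>),
  where m(\<theta>) = \<Sum>i<n. \<theta>/(\<theta> + i) is the mean of K, and m(c\<theta>) \<sim> c \<theta> log(n/\<theta>) = c a(\<theta>)
  when \<theta>/n \<rightarrow> 0. Chernoff's bound with c = x therefore gives
  P(K \<ge> x a) \<le> exp(-a (I(x) + o(1))) for x \<ge> 1, and the same for P(K \<le> x a) when x \<le> 1.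
  A closed set is covered by the two tails starting at its points nearest to 1, which gives the
  upper bound. For the lower bound, tilting by x^K turns the law with parameter \<theta> into the one
  with parameter x\<theta>, under which K/a concentrates at x by the same Chernoff bounds; on a small
  window around x the density of the original law with respect to the tilted one is
  exp(-a (I(x) + o(1))).
\<close>

section \<open>The law of the number of alleles\<close>

lemma sum_stirling_power:
  assumes "n > 0"
  shows "(\<Sum>k\<in>{1..n}. real (stirling n k) * y ^ k) = pochhammer (y::real) n"
proof -
  have "{..n} = insert 0 {1..n}" by auto
  then show ?thesis using stirling_pochhammer[of n y] assms by simp
qed

lemma Kprob_nonneg: "\<theta> > 0 \<Longrightarrow> 0 \<le> Kprob \<theta> n k"
  unfolding Kprob_def using pochhammer_pos[of \<theta> n] by simp

lemma sum_Kprob_power: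
  assumes "\<theta> > 0" "n > 0"
  shows "(\<Sum>k\<in>{1..n}. Kprob \<theta> n k * c ^ k) = pochhammer (c * \<theta>) n / pochhammer \<theta> n"
proof -
  have "(\<Sum>k\<in>{1..n}. Kprob \<theta> n k * c ^ k)
      = (\<Sum>k\<in>{1..n}. real (stirling n k) * (c * \<theta>) ^ k) / pochhammer \<theta> n"
    unfolding Kprob_def sum_divide_distrib by (rule sum.cong) (auto simp: power_mult_distrib)
  then show ?thesis using sum_stirling_power[OF assms(2)] by simp
qed

lemma sum_Kprob: "\<theta> > 0 \<Longrightarrow> n > 0 \<Longrightarrow> (\<Sum>k\<in>{1..n}. Kprob \<theta> n k) = 1"
  using sum_Kprob_power[of \<theta> n 1] pochhammer_pos[of \<theta> n] by simp

lemma Kprob_tilt: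
  assumes "\<theta> > 0" "c > 0"
  shows "Kprob \<theta> n k = Kprob (c * \<theta>) n k * (1 / c) ^ k * (pochhammer (c * \<theta>) n / pochhammer \<theta> n)"
  using pochhammer_pos[of "c * \<theta>" n] pochhammer_pos[of \<theta> n] assms
  unfolding Kprob_def by (simp add: field_simps)

lemma Kscaled_prob_nonneg: "\<theta> > 0 \<Longrightarrow> 0 \<le> Kscaled_prob \<theta> n a A"
  unfolding Kscaled_prob_def by (intro sum_nonneg Kprob_nonneg)

lemma Kscaled_prob_mono: "\<theta> > 0 \<Longrightarrow> A \<subseteq> B \<Longrightarrow> Kscaled_prob \<theta> n a A \<le> Kscaled_prob \<theta> n a B"
  unfolding Kscaled_prob_def by (rule sum_mono2) (auto simp: Kprob_nonneg)

lemma Kscaled_prob_UNIV: "\<theta> > 0 \<Longrightarrow> n > 0 \<Longrightarrow> Kscaled_prob \<theta> n a UNIV = 1"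
  unfolding Kscaled_prob_def using sum_Kprob[of \<theta> n] by (simp only: UNIV_I simp_thms Collect_mem_eq)

lemma Kscaled_prob_le_1: "\<theta> > 0 \<Longrightarrow> n > 0 \<Longrightarrow> Kscaled_prob \<theta> n a A \<le> 1"
  using Kscaled_prob_mono[of \<theta> A UNIV n a] Kscaled_prob_UNIV[of \<theta> n a] by simp

lemma Kscaled_prob_Un:
  assumes "\<theta> > 0"
  shows "Kscaled_prob \<theta> n a (A \<union> B) \<le> Kscaled_prob \<theta> n a A + Kscaled_prob \<theta> n a B"
proof -
  define S where "S C = {k\<in>{1..n}. real k / a \<in> C}" for C
  have S_Un: "S (A \<union> B) = S A \<union> S B" by (auto simp: S_def)
  have "sum (Kprob \<theta> n) (S A \<union> S B) + sum (Kprob \<theta> n) (S A \<inter> S B)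
      = sum (Kprob \<theta> n) (S A) + sum (Kprob \<theta> n) (S B)"
    by (rule sum.union_inter) (auto simp: S_def)
  moreover have "0 \<le> sum (Kprob \<theta> n) (S A \<inter> S B)"
    using assms by (intro sum_nonneg Kprob_nonneg)
  ultimately show ?thesis unfolding Kscaled_prob_def S_def[symmetric] S_Un by linarith
qed

lemma Kscaled_prob_nonpos_eq_0:
  assumes "a > 0" "\<forall>y\<in>A. y \<le> 0"
  shows "Kscaled_prob \<theta> n a A = 0"
proof -
  have empty: "{k\<in>{1..n}. real k / a \<in> A} = {}"
    using assms by (fastforce simp: divide_le_0_iff)
  show ?thesis unfolding Kscaled_prob_def empty by simp
qed

text \<open>K_n(\<theta>) is a sum of independent Bernoulli(\<theta>/(\<theta> + i)) variables, i < n, so this is its mean.\<close>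

definition Kmean :: "real \<Rightarrow> nat \<Rightarrow> real" where
  "Kmean \<theta> n = (\<Sum>i<n. \<theta> / (\<theta> + real i))"

definition Ksum_sq :: "real \<Rightarrow> nat \<Rightarrow> real" where
  "Ksum_sq \<theta> n = (\<Sum>i<n. (\<theta> / (\<theta> + real i))\<^sup>2)"

lemma min_one_le_convex_comb:
  fixes c p :: real
  assumes "0 \<le> p" "p \<le> 1"
  shows "min 1 c \<le> 1 + (c - 1) * p"
proof (cases "c \<le> 1")
  case True
  have "c * (1 - p) \<le> 1 - p" using True assms mult_right_mono[of c 1 "1 - p"] by simp
  then show ?thesis using True by (simp add: algebra_simps)
next
  case False
  then show ?thesis using assms by simp
qed

lemma ln_add_one_ge:
  fixes u m :: real
  assumes "0 < m" "m \<le> 1 + u"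
  shows "u - u\<^sup>2 / m \<le> ln (1 + u)"
proof -
  have pos: "0 < 1 + u" using assms by linarith
  have "ln (1 / (1 + u)) \<le> 1 / (1 + u) - 1" using pos by (intro ln_le_minus_one) simp
  then have "u - u\<^sup>2 / (1 + u) \<le> ln (1 + u)"
    using pos by (simp add: ln_div field_simps power2_eq_square)
  moreover have "u\<^sup>2 / (1 + u) \<le> u\<^sup>2 / m" using assms by (intro divide_left_mono) auto
  ultimately show ?thesis by linarith
qed

lemma pochhammer_ratio_eq_prod:
  assumes "\<theta> > 0"
  shows "pochhammer (c * \<theta>) n / pochhammer \<theta> n = (\<Prod>i<n. 1 + (c - 1) * (\<theta> / (\<theta> + real i)))"
proof -
  have "pochhammer (c * \<theta>) n / pochhammer \<theta> n = (\<Prod>i<n. (c * \<theta> + real i) / (\<theta> + real i))"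
    by (simp add: pochhammer_prod lessThan_atLeast0 prod_dividef)
  also have "\<dots> = (\<Prod>i<n. 1 + (c - 1) * (\<theta> / (\<theta> + real i)))"
  proof (rule prod.cong)
    fix i have "\<theta> + real i > 0" using assms by simp
    then show "(c * \<theta> + real i) / (\<theta> + real i) = 1 + (c - 1) * (\<theta> / (\<theta> + real i))"
      by (simp add: field_simps)
  qed simp
  finally show ?thesis .
qed

lemma pochhammer_ratio_le_exp:
  assumes "\<theta> > 0" "c > 0"
  shows "pochhammer (c * \<theta>) n / pochhammer \<theta> n \<le> exp ((c - 1) * Kmean \<theta> n)"
proof -
  have "(\<Prod>i<n. 1 + (c - 1) * (\<theta> / (\<theta> + real i))) \<le> (\<Prod>i<n. exp ((c - 1) * (\<theta> / (\<theta> + real i))))"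
  proof (rule prod_mono)
    fix i
    have "0 < min 1 c" using assms by simp
    also have "min 1 c \<le> 1 + (c - 1) * (\<theta> / (\<theta> + real i))"
      using assms by (intro min_one_le_convex_comb) auto
    finally show "0 \<le> 1 + (c - 1) * (\<theta> / (\<theta> + real i)) \<and>
        1 + (c - 1) * (\<theta> / (\<theta> + real i)) \<le> exp ((c - 1) * (\<theta> / (\<theta> + real i)))"
      by simp
  qed
  then show ?thesis
    unfolding pochhammer_ratio_eq_prod[OF assms(1)] Kmean_def
    by (simp add: exp_sum sum_distrib_left)
qed

lemma ln_pochhammer_ratio_ge:
  assumes "\<theta> > 0" "c > 0"
  shows "(c - 1) * Kmean \<theta> n - (c - 1)\<^sup>2 / min 1 c * Ksum_sq \<theta> n
    \<le> ln (pochhammer (c * \<theta>) n / pochhammer \<theta> n)"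
proof -
  define p where "p i = \<theta> / (\<theta> + real i)" for i
  have p: "0 \<le> p i" "p i \<le> 1" for i using assms by (auto simp: p_def)
  have m: "0 < min 1 c" "min 1 c \<le> 1 + (c - 1) * p i" for i
    using assms p by (auto intro: min_one_le_convex_comb)
  then have nonzero: "1 + (c - 1) * p i \<noteq> 0" for i
    by (metis order.strict_trans2 less_irrefl)
  have "(c - 1) * Kmean \<theta> n - (c - 1)\<^sup>2 / min 1 c * Ksum_sq \<theta> n
      = (\<Sum>i<n. (c - 1) * p i - (c - 1)\<^sup>2 * (p i)\<^sup>2 / min 1 c)"
    unfolding Kmean_def Ksum_sq_def p_def
    by (simp add: sum_subtractf sum_distrib_left sum_divide_distrib power_mult_distrib)
  also have "\<dots> \<le> (\<Sum>i<n. ln (1 + (c - 1) * p i))"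
    using m ln_add_one_ge[of "min 1 c" "(c - 1) * p _"] by (intro sum_mono) (simp add: power_mult_distrib)
  also have "\<dots> = ln (\<Prod>i<n. 1 + (c - 1) * p i)"
    using nonzero by (intro ln_prod[symmetric]) auto
  finally show ?thesis unfolding pochhammer_ratio_eq_prod[OF assms(1)] p_def .
qed

lemma Kscaled_prob_chernoff:
  assumes "\<theta> > 0" "n > 0" "a > 0" "c > 0"
    and A: "\<forall>x\<in>A. 0 \<le> ln c * (x - z)"
  shows "Kscaled_prob \<theta> n a A \<le> exp ((c - 1) * Kmean \<theta> n - ln c * z * a)"
proof -
  define K where "K = {k\<in>{1..n}. real k / a \<in> A}"
  have "Kscaled_prob \<theta> n a A \<le> (\<Sum>k\<in>K. Kprob \<theta> n k * c ^ k) * exp (- ln c * z * a)"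
    unfolding Kscaled_prob_def K_def[symmetric] sum_distrib_right
  proof (rule sum_mono)
    fix k assume "k \<in> K"
    then have "0 \<le> ln c * (real k / a - z)" using A by (auto simp: K_def)
    then have "0 \<le> real k * ln c - ln c * z * a"
      using \<open>a > 0\<close> by (simp add: field_simps)
    then have "1 \<le> exp (real k * ln c) * exp (- ln c * z * a)"
      by (simp add: exp_add[symmetric])
    then have "1 \<le> c ^ k * exp (- ln c * z * a)"
      using \<open>c > 0\<close> by (simp add: exp_of_nat_mult)
    then show "Kprob \<theta> n k \<le> Kprob \<theta> n k * c ^ k * exp (- ln c * z * a)"
      using Kprob_nonneg[OF \<open>\<theta> > 0\<close>, of n k] mult_left_mono by (fastforce simp: mult.assoc)
  qed
  also have "\<dots> \<le> (\<Sum>k\<in>{1..n}. Kprob \<theta> n k * c ^ k) * exp (- ln c * z * a)"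
    using assms Kprob_nonneg by (intro mult_right_mono sum_mono2) (auto simp: K_def)
  also have "\<dots> \<le> exp ((c - 1) * Kmean \<theta> n) * exp (- ln c * z * a)"
    unfolding sum_Kprob_power[OF assms(1,2)]
    using pochhammer_ratio_le_exp[OF assms(1,4)] by (rule mult_right_mono) simp
  finally show ?thesis by (simp add: exp_add[symmetric])
qed

lemma Kscaled_prob_ge_tilted:
  assumes "\<theta> > 0" "x > 0" "a > 0" and A: "\<forall>y\<in>A. \<bar>y - x\<bar> \<le> \<delta>"
  shows "Kscaled_prob (x * \<theta>) n a A * exp (- (x * ln x + \<delta> * \<bar>ln x\<bar>) * a)
      * (pochhammer (x * \<theta>) n / pochhammer \<theta> n) \<le> Kscaled_prob \<theta> n a A"
  unfolding Kscaled_prob_def sum_distrib_right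
proof (rule sum_mono)
  fix k assume "k \<in> {k\<in>{1..n}. real k / a \<in> A}"
  then have "\<bar>real k / a - x\<bar> \<le> \<delta>" using A by auto
  moreover have "real k - x * a = a * (real k / a - x)" using \<open>a > 0\<close> by (simp add: field_simps)
  ultimately have "\<bar>real k - x * a\<bar> \<le> \<delta> * a"
    using \<open>a > 0\<close> by (simp add: abs_mult mult.commute)
  then have "\<bar>real k - x * a\<bar> * \<bar>ln x\<bar> \<le> \<delta> * a * \<bar>ln x\<bar>"
    by (rule mult_right_mono) simp
  moreover have "(real k - x * a) * ln x \<le> \<bar>real k - x * a\<bar> * \<bar>ln x\<bar>"
    using abs_ge_self[of "(real k - x * a) * ln x"] by (simp add: abs_mult)
  ultimately have "(real k - x * a) * ln x \<le> \<delta> * a * \<bar>ln x\<bar>" by linarith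
  then have "exp (- (x * ln x + \<delta> * \<bar>ln x\<bar>) * a) \<le> exp (real k * ln (1 / x))"
    using \<open>x > 0\<close> by (simp add: ln_div algebra_simps)
  also have "\<dots> = (1 / x) ^ k" using \<open>x > 0\<close> by (simp add: exp_of_nat_mult)
  finally have "Kprob (x * \<theta>) n k * exp (- (x * ln x + \<delta> * \<bar>ln x\<bar>) * a)
      * (pochhammer (x * \<theta>) n / pochhammer \<theta> n)
      \<le> Kprob (x * \<theta>) n k * (1 / x) ^ k * (pochhammer (x * \<theta>) n / pochhammer \<theta> n)"
    using assms Kprob_nonneg[of "x * \<theta>" n k] pochhammer_pos[of "x * \<theta>" n] pochhammer_pos[of \<theta> n]
    by (intro mult_right_mono mult_left_mono) auto
  then show "Kprob (x * \<theta>) n k * exp (- (x * ln x + \<delta> * \<bar>ln x\<bar>) * a)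
      * (pochhammer (x * \<theta>) n / pochhammer \<theta> n) \<le> Kprob \<theta> n k"
    using Kprob_tilt[OF assms(1,2)] by simp
qed

lemma ln_Kscaled_prob_ge_tilted:
  assumes "\<theta> > 0" "x > 0" "a > 0" "\<forall>y\<in>A. \<bar>y - x\<bar> \<le> \<delta>"
    and Q: "0 < Kscaled_prob (x * \<theta>) n a A"
  shows "0 < Kscaled_prob \<theta> n a A \<and>
    ln (Kscaled_prob (x * \<theta>) n a A) - (x * ln x + \<delta> * \<bar>ln x\<bar>) * a
      + ((x - 1) * Kmean \<theta> n - (x - 1)\<^sup>2 / min 1 x * Ksum_sq \<theta> n)
    \<le> ln (Kscaled_prob \<theta> n a A)"
proof -
  define E where "E = exp (- (x * ln x + \<delta> * \<bar>ln x\<bar>) * a)"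
  define R where "R = pochhammer (x * \<theta>) n / pochhammer \<theta> n"
  have "0 < R" using assms by (simp add: R_def pochhammer_pos)
  have tilted: "Kscaled_prob (x * \<theta>) n a A * E * R \<le> Kscaled_prob \<theta> n a A"
    unfolding E_def R_def using Kscaled_prob_ge_tilted[OF assms(1-4)] .
  moreover have pos: "0 < Kscaled_prob (x * \<theta>) n a A * E * R"
    using Q \<open>0 < R\<close> by (simp add: E_def)
  ultimately have P_pos: "0 < Kscaled_prob \<theta> n a A" by linarith
  have "ln (Kscaled_prob (x * \<theta>) n a A) - (x * ln x + \<delta> * \<bar>ln x\<bar>) * a
      + ((x - 1) * Kmean \<theta> n - (x - 1)\<^sup>2 / min 1 x * Ksum_sq \<theta> n)
      \<le> ln (Kscaled_prob (x * \<theta>) n a A) + ln E + ln R"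
    using ln_pochhammer_ratio_ge[OF assms(1,2), of n] unfolding E_def R_def by (simp add: algebra_simps)
  also have "\<dots> = ln (Kscaled_prob (x * \<theta>) n a A * E * R)"
    using Q \<open>0 < R\<close> by (simp add: E_def ln_mult)
  also have "\<dots> \<le> ln (Kscaled_prob \<theta> n a A)"
    using tilted pos P_pos by (subst ln_le_cancel_iff) auto
  finally show ?thesis using P_pos by simp
qed

lemma ln_add_one_diff_le:
  fixes x :: real
  shows "x > 0 \<Longrightarrow> ln (x + 1) - ln x \<le> 1 / x"
  using ln_le_minus_one[of "(x + 1) / x"] by (simp add: ln_div field_simps)

lemma ln_add_one_diff_ge:
  fixes x :: real
  shows "x > 0 \<Longrightarrow> 1 / (x + 1) \<le> ln (x + 1) - ln x"
  using ln_le_minus_one[of "x / (x + 1)"] by (simp add: ln_div field_simps)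

lemma ln_one_plus_div_eq_sum:
  assumes "\<theta> > 0"
  shows "ln (1 + real n / \<theta>) = (\<Sum>i<n. ln (\<theta> + real i + 1) - ln (\<theta> + real i))"
proof -
  have "1 + real n / \<theta> = (\<theta> + real n) / \<theta>" using assms by (simp add: field_simps)
  then have "ln (1 + real n / \<theta>) = ln (\<theta> + real n) - ln \<theta>"
    using assms by (simp add: ln_div add_pos_nonneg)
  then show ?thesis
    using sum_lessThan_telescope[of "\<lambda>i. ln (\<theta> + real i)" n] by (simp add: add_ac)
qed

lemma Kmean_ge:
  assumes "\<theta> > 0"
  shows "\<theta> * ln (1 + real n / \<theta>) \<le> Kmean \<theta> n"
  unfolding ln_one_plus_div_eq_sum[OF assms] Kmean_def sum_distrib_left
proof (intro sum_mono)
  fix i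
  have "\<theta> * (ln (\<theta> + real i + 1) - ln (\<theta> + real i)) \<le> \<theta> * (1 / (\<theta> + real i))"
    using assms by (intro mult_left_mono ln_add_one_diff_le) auto
  then show "\<theta> * (ln (\<theta> + real i + 1) - ln (\<theta> + real i)) \<le> \<theta> / (\<theta> + real i)" by simp
qed

lemma Kmean_le:
  assumes "\<theta> > 0"
  shows "Kmean \<theta> n \<le> 1 + \<theta> * ln (1 + real n / \<theta>)"
proof -
  have "Kmean \<theta> n \<le> (\<Sum>i<Suc n. \<theta> / (\<theta> + real i))"
    unfolding Kmean_def using assms by simp
  also have "\<dots> = 1 + (\<Sum>i<n. \<theta> / (\<theta> + real i + 1))"
    unfolding sum.lessThan_Suc_shift using assms by (simp add: add_ac)
  also have "(\<Sum>i<n. \<theta> / (\<theta> + real i + 1)) \<le> \<theta> * ln (1 + real n / \<theta>)"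
    unfolding ln_one_plus_div_eq_sum[OF assms] sum_distrib_left
  proof (intro sum_mono)
    fix i
    have "\<theta> * (1 / (\<theta> + real i + 1)) \<le> \<theta> * (ln (\<theta> + real i + 1) - ln (\<theta> + real i))"
      using assms by (intro mult_left_mono ln_add_one_diff_ge) auto
    then show "\<theta> / (\<theta> + real i + 1) \<le> \<theta> * (ln (\<theta> + real i + 1) - ln (\<theta> + real i))" by simp
  qed
  finally show ?thesis by simp
qed

lemma inverse_square_le_telescope:
  fixes x :: real
  assumes "x \<ge> 1"
  shows "1 / x\<^sup>2 \<le> 2 / x - 2 / (x + 1)"
proof -
  have "2 / x - 2 / (x + 1) = 2 / (x * (x + 1))" using assms by (simp add: field_simps)
  moreover have "1 / x\<^sup>2 \<le> 2 / (x * (x + 1))"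
    using assms by (simp add: power2_eq_square divide_simps)
  ultimately show ?thesis by simp
qed

lemma Ksum_sq_le:
  assumes "\<theta> \<ge> 1"
  shows "Ksum_sq \<theta> n \<le> 2 * \<theta>"
proof -
  have "Ksum_sq \<theta> n = \<theta>\<^sup>2 * (\<Sum>i<n. 1 / (\<theta> + real i)\<^sup>2)"
    unfolding Ksum_sq_def by (simp add: sum_distrib_left power_divide)
  also have "(\<Sum>i<n. 1 / (\<theta> + real i)\<^sup>2) \<le> (\<Sum>i<n. 2 / (\<theta> + real i) - 2 / (\<theta> + real (Suc i)))"
    using assms inverse_square_le_telescope[of "\<theta> + real _"] by (intro sum_mono) (simp add: add_ac)
  also have "\<dots> = 2 / \<theta> - 2 / (\<theta> + real n)"
    using sum_lessThan_telescope'[of "\<lambda>i. 2 / (\<theta> + real i)" n] by simp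
  also have "\<dots> \<le> 2 / \<theta>" using assms by simp
  finally show ?thesis
    using assms by (simp add: mult_left_mono power2_eq_square)
qed

lemma Limsup_nlog_le:
  fixes a p :: "real \<Rightarrow> real" and J :: ereal
  assumes a: "filterlim a at_top at_top" and "C > 0"
    and p: "\<And>b. ereal b < J \<Longrightarrow> eventually (\<lambda>\<theta>. p \<theta> \<le> C * exp (- b * a \<theta>)) at_top"
  shows "Limsup at_top (\<lambda>\<theta>. nlog (a \<theta>) (p \<theta>)) \<le> - J"
  unfolding Limsup_le_iff
proof (intro allI impI)
  fix y :: ereal assume y: "- J < y"
  show "eventually (\<lambda>\<theta>. nlog (a \<theta>) (p \<theta>) < y) at_top"
  proof (cases y)
    case PInf then show ?thesis by (simp add: nlog_def)
  next
    case MInf then show ?thesis using y by simp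
  next
    case (real r)
    then have "ereal (- r) < J" using y by (metis ereal_uminus_less_reorder uminus_ereal.simps(1))
    then obtain z where z: "ereal (- r) < z" "z < J" using dense by blast
    then obtain b where b: "- r < b" "ereal b < J" by (cases z) auto
    have "((\<lambda>\<theta>. ln C * inverse (a \<theta>)) \<longlongrightarrow> ln C * 0) at_top"
      by (intro tendsto_intros tendsto_inverse_0_at_top a)
    then have small: "eventually (\<lambda>\<theta>. ln C * inverse (a \<theta>) < b + r) at_top"
      using b by (intro order_tendstoD(2)) auto
    have pos: "eventually (\<lambda>\<theta>. 0 < a \<theta>) at_top"
      using a by (simp add: filterlim_at_top_dense)
    show ?thesis using p[OF b(2)] small pos
    proof eventually_elim
      case (elim \<theta>)
      show ?case
      proof (cases "p \<theta> \<le> 0")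
        case True then show ?thesis by (simp add: nlog_def real)
      next
        case False
        then have "ln (p \<theta>) \<le> ln (C * exp (- b * a \<theta>))"
          using elim(1) by (subst ln_le_cancel_iff) auto
        then have "ln (p \<theta>) / a \<theta> \<le> ln C * inverse (a \<theta>) - b"
          using elim(3) \<open>C > 0\<close> by (simp add: ln_mult field_simps)
        then show ?thesis using False elim(2) real by (simp add: nlog_def)
      qed
    qed
  qed
qed

lemma Liminf_nlog_ge:
  fixes a p :: "real \<Rightarrow> real"
  assumes "\<And>c. c < r \<Longrightarrow> eventually (\<lambda>\<theta>. 0 < p \<theta> \<and> c < ln (p \<theta>) / a \<theta>) at_top"
  shows "ereal r \<le> Liminf at_top (\<lambda>\<theta>. nlog (a \<theta>) (p \<theta>))"
  unfolding le_Liminf_iff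
proof (intro allI impI)
  fix y :: ereal assume "y < ereal r"
  then obtain c where c: "y \<le> ereal c" "c < r"
    by (cases y) (auto intro: that[of "r - 1"])
  show "eventually (\<lambda>\<theta>. y < nlog (a \<theta>) (p \<theta>)) at_top"
    using assms[OF c(2)] by eventually_elim (auto simp: nlog_def intro: le_less_trans[OF c(1)])
qed

lemma rateI_eq: "rateI x = x * ln x - x + 1"
  unfolding rateI_def by simp

lemma rateI_pos:
  assumes "x \<ge> 0" "x \<noteq> 1"
  shows "0 < rateI x"
proof (cases "x = 0")
  case False
  then have x: "x > 0" using assms by simp
  have "ln (1 / x) \<le> 1 / x - 1" using x by (intro ln_le_minus_one) simp
  moreover have "ln (1 / x) \<noteq> 1 / x - 1"
    using ln_eq_minus_one[of "1 / x"] x assms(2) by auto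
  ultimately have "- ln x < 1 / x - 1" using x by (simp add: ln_div)
  then have "x * (- ln x) < x * (1 / x - 1)" using x by (intro mult_strict_left_mono)
  then show ?thesis using x by (simp add: rateI_eq right_diff_distrib)
qed (simp add: rateI_def)

lemma rateI_nonneg: "x \<ge> 0 \<Longrightarrow> 0 \<le> rateI x"
  using rateI_pos[of x] by (cases "x = 1") (auto simp: rateI_def)

lemma rateI_le_one:
  assumes "0 \<le> x" "x \<le> 1"
  shows "rateI x \<le> 1"
proof -
  have "x * ln x \<le> 0" using assms by (cases "x = 0") (auto intro: mult_nonneg_nonpos)
  then show ?thesis using assms by (simp add: rateI_eq)
qed

lemma continuous_on_rateI: "continuous_on {0..} rateI"
proof -
  have "continuous (at x within {0..}) (\<lambda>x. x * ln x - x + 1)" if "x \<ge> 0" for x :: real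
  proof (cases "x = 0")
    case True
    have "((\<lambda>x::real. x * ln x - x + 1) \<longlongrightarrow> 1) (at_right 0)" by real_asymp
    then show ?thesis using True by (simp add: continuous_within at_within_Ici_at_right)
  next
    case False
    then have "isCont (\<lambda>x. x * ln x - x + 1) x" using that by (intro continuous_intros) auto
    then show ?thesis by (rule continuous_at_imp_continuous_within)
  qed
  then show ?thesis
    unfolding continuous_on_eq_continuous_within rateI_eq[abs_def] by simp
qed

lemma closedin_rateI_sublevel: "closedin (top_of_set {0..}) {x\<in>{0..}. rateI x \<le> c}"
proof -
  have "closed {x\<in>{0..}. rateI x \<le> c}"
    by (rule continuous_on_closed_Collect_le[OF continuous_on_rateI continuous_on_const]) simp
  then show ?thesis by (intro closed_subset) auto
qed

section \<open>The regime \<theta>/n \<rightarrow> 0\<close>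

locale sampling_regime =
  fixes n :: "real \<Rightarrow> nat"
  assumes n_pos: "\<And>\<theta>. 0 < n \<theta>"
    and ratio_tendsto_0: "((\<lambda>\<theta>. \<theta> / real (n \<theta>)) \<longlongrightarrow> 0) at_top"
begin

definition log_ratio :: "real \<Rightarrow> real" where
  "log_ratio \<theta> = ln (real (n \<theta>) / \<theta>)"

definition speed :: "real \<Rightarrow> real" where
  "speed \<theta> = \<theta> * ln (real (n \<theta>) / \<theta>)"

lemma speed_eq: "speed \<theta> = \<theta> * log_ratio \<theta>"
  unfolding speed_def log_ratio_def ..

lemma log_ratio_tendsto: "filterlim log_ratio at_top at_top"
proof -
  have "eventually (\<lambda>\<theta>. 0 < \<theta> / real (n \<theta>)) at_top"
    using eventually_gt_at_top[of "0::real"] by eventually_elim (simp add: n_pos)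
  then have "filterlim (\<lambda>\<theta>. \<theta> / real (n \<theta>)) (at_right 0) at_top"
    by (rule tendsto_imp_filterlim_at_right[OF ratio_tendsto_0])
  then have "filterlim (\<lambda>\<theta>. ln (inverse (\<theta> / real (n \<theta>)))) at_top at_top"
    by (rule filterlim_compose[OF ln_at_top filterlim_compose[OF filterlim_inverse_at_top_right]])
  then show ?thesis unfolding log_ratio_def by simp
qed

lemma eventually_speed_ge: "eventually (\<lambda>\<theta>. 1 \<le> \<theta> \<and> 1 \<le> log_ratio \<theta> \<and> \<theta> \<le> speed \<theta>) at_top"
  using eventually_ge_at_top[of 1] log_ratio_tendsto[unfolded filterlim_at_top, rule_format, of 1]
proof eventually_elim
  case (elim \<theta>)
  then have "\<theta> * 1 \<le> \<theta> * log_ratio \<theta>" by (intro mult_left_mono) auto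
  then show ?case using elim by (simp add: speed_eq)
qed

lemma speed_tendsto: "filterlim speed at_top at_top"
  using eventually_speed_ge
  by (intro filterlim_at_top_mono[OF filterlim_ident]) (auto elim: eventually_mono)

lemma ln_one_plus_div_log_ratio_tendsto:
  assumes "c > 0"
  shows "((\<lambda>\<theta>. ln (1 + real (n \<theta>) / (c * \<theta>)) / log_ratio \<theta>) \<longlongrightarrow> 1) at_top"
proof -
  have "((\<lambda>\<theta>. 1 + ln (\<theta> / real (n \<theta>) + 1 / c) * inverse (log_ratio \<theta>)) \<longlongrightarrow> 1 + ln (0 + 1 / c) * 0) at_top"
    using assms by (intro tendsto_intros ratio_tendsto_0 tendsto_inverse_0_at_top log_ratio_tendsto) auto
  moreover have "eventually (\<lambda>\<theta>. 1 + ln (\<theta> / real (n \<theta>) + 1 / c) * inverse (log_ratio \<theta>)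
      = ln (1 + real (n \<theta>) / (c * \<theta>)) / log_ratio \<theta>) at_top"
    using eventually_speed_ge
  proof eventually_elim
    case (elim \<theta>)
    have pos: "0 < real (n \<theta>) / \<theta>" "0 < \<theta> / real (n \<theta>) + 1 / c"
      using elim assms n_pos[of \<theta>] by (auto intro: add_pos_pos)
    have split: "1 + real (n \<theta>) / (c * \<theta>) = (real (n \<theta>) / \<theta>) * (\<theta> / real (n \<theta>) + 1 / c)"
      using elim assms n_pos[of \<theta>] by (simp add: field_simps)
    have "ln (1 + real (n \<theta>) / (c * \<theta>)) = log_ratio \<theta> + ln (\<theta> / real (n \<theta>) + 1 / c)"
      unfolding log_ratio_def split ln_mult using pos elim n_pos[of \<theta>] by simp
    then show ?case using elim by (simp add: field_simps)
  qed
  ultimately show ?thesis by (simp add: tendsto_cong)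
qed

lemma Kmean_speed_tendsto:
  assumes "c > 0"
  shows "((\<lambda>\<theta>. Kmean (c * \<theta>) (n \<theta>) / speed \<theta>) \<longlongrightarrow> c) at_top"
proof -
  define L where "L \<theta> = ln (1 + real (n \<theta>) / (c * \<theta>)) / log_ratio \<theta>" for \<theta>
  have L: "(L \<longlongrightarrow> 1) at_top"
    unfolding L_def using assms by (rule ln_one_plus_div_log_ratio_tendsto)
  have lower: "eventually (\<lambda>\<theta>. c * L \<theta> \<le> Kmean (c * \<theta>) (n \<theta>) / speed \<theta>) at_top"
    using eventually_speed_ge
  proof eventually_elim
    case (elim \<theta>)
    then have "c * \<theta> * ln (1 + real (n \<theta>) / (c * \<theta>)) / speed \<theta> \<le> Kmean (c * \<theta>) (n \<theta>) / speed \<theta>"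
      using assms by (intro divide_right_mono Kmean_ge) auto
    then show ?case using elim unfolding L_def speed_eq by simp
  qed
  have upper: "eventually (\<lambda>\<theta>. Kmean (c * \<theta>) (n \<theta>) / speed \<theta> \<le> c * L \<theta> + inverse (speed \<theta>)) at_top"
    using eventually_speed_ge
  proof eventually_elim
    case (elim \<theta>)
    then have "Kmean (c * \<theta>) (n \<theta>) / speed \<theta> \<le> (1 + c * \<theta> * ln (1 + real (n \<theta>) / (c * \<theta>))) / speed \<theta>"
      using assms by (intro divide_right_mono Kmean_le) auto
    moreover have "(1 + c * \<theta> * ln (1 + real (n \<theta>) / (c * \<theta>))) / speed \<theta> = c * L \<theta> + inverse (speed \<theta>)"
      using elim unfolding L_def speed_eq by (simp add: field_simps)
    ultimately show ?case by simp
  qed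
  have "((\<lambda>\<theta>. c * L \<theta> + inverse (speed \<theta>)) \<longlongrightarrow> c * 1 + 0) at_top"
    by (intro tendsto_intros L tendsto_inverse_0_at_top speed_tendsto)
  then show ?thesis using tendsto_sandwich[OF lower upper] tendsto_mult_left[OF L, of c] by simp
qed

lemma Ksum_sq_speed_tendsto: "((\<lambda>\<theta>. Ksum_sq \<theta> (n \<theta>) / speed \<theta>) \<longlongrightarrow> 0) at_top"
proof (rule tendsto_sandwich)
  show "eventually (\<lambda>\<theta>. 0 \<le> Ksum_sq \<theta> (n \<theta>) / speed \<theta>) at_top"
    using eventually_speed_ge by eventually_elim (auto simp: Ksum_sq_def intro!: divide_nonneg_pos sum_nonneg)
  show "eventually (\<lambda>\<theta>. Ksum_sq \<theta> (n \<theta>) / speed \<theta> \<le> 2 * inverse (log_ratio \<theta>)) at_top"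
    using eventually_speed_ge
  proof eventually_elim
    case (elim \<theta>)
    then have "Ksum_sq \<theta> (n \<theta>) / speed \<theta> \<le> 2 * \<theta> / speed \<theta>"
      by (intro divide_right_mono Ksum_sq_le) auto
    then show ?case using elim by (simp add: speed_eq field_simps)
  qed
  show "((\<lambda>\<theta>. 2 * inverse (log_ratio \<theta>)) \<longlongrightarrow> 0) at_top"
    using tendsto_mult_left[OF tendsto_inverse_0_at_top[OF log_ratio_tendsto], of 2] by simp
qed simp

lemma eventually_exp_speed_le:
  assumes "(h \<longlongrightarrow> l) at_top" "l < - b"
  shows "eventually (\<lambda>\<theta>. exp (speed \<theta> * h \<theta>) \<le> exp (- b * speed \<theta>)) at_top"
  using order_tendstoD(2)[OF assms] eventually_speed_ge
proof eventually_elim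
  case (elim \<theta>)
  then have "speed \<theta> * h \<theta> \<le> speed \<theta> * (- b)" by (intro mult_left_mono) auto
  then show ?case by (simp add: mult.commute)
qed

lemma eventually_Kscaled_prob_le_exp:
  assumes "s > 0" "y > 0" and A: "\<forall>z\<in>A. 0 \<le> ln (y / s) * (z - y)" and b: "b < s * rateI (y / s)"
  shows "eventually (\<lambda>\<theta>. Kscaled_prob (s * \<theta>) (n \<theta>) (speed \<theta>) A \<le> exp (- b * speed \<theta>)) at_top"
proof -
  define h where "h \<theta> = (y / s - 1) * (Kmean (s * \<theta>) (n \<theta>) / speed \<theta>) - ln (y / s) * y" for \<theta>
  have "(h \<longlongrightarrow> (y / s - 1) * s - ln (y / s) * y) at_top"
    unfolding h_def by (intro tendsto_intros Kmean_speed_tendsto assms(1))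
  moreover have "(y / s - 1) * s - ln (y / s) * y = - (s * rateI (y / s))"
    using assms(1) by (simp add: rateI_eq field_simps)
  ultimately have "eventually (\<lambda>\<theta>. exp (speed \<theta> * h \<theta>) \<le> exp (- b * speed \<theta>)) at_top"
    using b by (intro eventually_exp_speed_le) auto
  then show ?thesis using eventually_speed_ge
  proof eventually_elim
    case (elim \<theta>)
    have "Kscaled_prob (s * \<theta>) (n \<theta>) (speed \<theta>) A
        \<le> exp ((y / s - 1) * Kmean (s * \<theta>) (n \<theta>) - ln (y / s) * y * speed \<theta>)"
      using elim assms n_pos by (intro Kscaled_prob_chernoff) auto
    also have "(y / s - 1) * Kmean (s * \<theta>) (n \<theta>) - ln (y / s) * y * speed \<theta> = speed \<theta> * h \<theta>"
      using elim by (simp add: h_def field_simps)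
    finally show ?case using elim(1) by linarith
  qed
qed

lemma Kscaled_prob_tendsto_0:
  assumes "s > 0" "y > 0" "y \<noteq> s" "\<forall>z\<in>A. 0 \<le> ln (y / s) * (z - y)"
  shows "((\<lambda>\<theta>. Kscaled_prob (s * \<theta>) (n \<theta>) (speed \<theta>) A) \<longlongrightarrow> 0) at_top"
proof (rule tendsto_sandwich[of "\<lambda>_. 0"])
  define b where "b = s * rateI (y / s) / 2"
  have "0 < rateI (y / s)" using assms by (intro rateI_pos) auto
  then have b: "0 < b" "b < s * rateI (y / s)" using assms(1) by (auto simp: b_def)
  show "eventually (\<lambda>\<theta>. Kscaled_prob (s * \<theta>) (n \<theta>) (speed \<theta>) A \<le> exp (- b * speed \<theta>)) at_top"
    using assms b by (intro eventually_Kscaled_prob_le_exp) auto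
  have "filterlim (\<lambda>\<theta>. - b * speed \<theta>) at_bot at_top"
    using b by (intro filterlim_tendsto_neg_mult_at_bot[OF tendsto_const _ speed_tendsto]) simp
  then show "((\<lambda>\<theta>. exp (- b * speed \<theta>)) \<longlongrightarrow> 0) at_top"
    by (rule filterlim_compose[OF exp_at_bot])
  show "eventually (\<lambda>\<theta>. 0 \<le> Kscaled_prob (s * \<theta>) (n \<theta>) (speed \<theta>) A) at_top"
    using eventually_gt_at_top[of 0] by eventually_elim (use assms in \<open>simp add: Kscaled_prob_nonneg\<close>)
qed simp

lemma Kscaled_prob_window_tendsto_1:
  assumes "0 < \<delta>" "\<delta> < x"
  shows "((\<lambda>\<theta>. Kscaled_prob (x * \<theta>) (n \<theta>) (speed \<theta>) {x - \<delta><..<x + \<delta>}) \<longlongrightarrow> 1) at_top"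
proof (rule tendsto_sandwich)
  let ?P = "\<lambda>\<theta> A. Kscaled_prob (x * \<theta>) (n \<theta>) (speed \<theta>) A"
  have upper_tail: "((\<lambda>\<theta>. ?P \<theta> {x + \<delta>..}) \<longlongrightarrow> 0) at_top"
    using assms by (intro Kscaled_prob_tendsto_0[of x "x + \<delta>"]) auto
  have "0 \<le> ln ((x - \<delta>) / x) * (z - (x - \<delta>))" if "z \<le> x - \<delta>" for z
    using assms that by (intro mult_nonpos_nonpos) auto
  then have lower_tail: "((\<lambda>\<theta>. ?P \<theta> {..x - \<delta>}) \<longlongrightarrow> 0) at_top"
    using assms by (intro Kscaled_prob_tendsto_0[of x "x - \<delta>"]) auto
  have "((\<lambda>\<theta>. 1 - ?P \<theta> {x + \<delta>..} - ?P \<theta> {..x - \<delta>}) \<longlongrightarrow> 1 - 0 - 0) at_top"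
    by (intro tendsto_intros upper_tail lower_tail)
  then show "((\<lambda>\<theta>. 1 - ?P \<theta> {x + \<delta>..} - ?P \<theta> {..x - \<delta>}) \<longlongrightarrow> 1) at_top" by simp
  show "eventually (\<lambda>\<theta>. 1 - ?P \<theta> {x + \<delta>..} - ?P \<theta> {..x - \<delta>} \<le> ?P \<theta> {x - \<delta><..<x + \<delta>}) at_top"
    using eventually_gt_at_top[of 0]
  proof eventually_elim
    case (elim \<theta>)
    then have pos: "0 < x * \<theta>" using assms by simp
    have "UNIV = ({x - \<delta><..<x + \<delta>} \<union> {x + \<delta>..}) \<union> {..x - \<delta>}" by auto
    then have "1 \<le> ?P \<theta> ({x - \<delta><..<x + \<delta>} \<union> {x + \<delta>..}) + ?P \<theta> {..x - \<delta>}"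
      using Kscaled_prob_UNIV[OF pos n_pos] Kscaled_prob_Un[OF pos] by metis
    then show ?case using Kscaled_prob_Un[OF pos, of "n \<theta>" "speed \<theta>" "{x - \<delta><..<x + \<delta>}" "{x + \<delta>..}"]
      by simp
  qed
  show "eventually (\<lambda>\<theta>. ?P \<theta> {x - \<delta><..<x + \<delta>} \<le> 1) at_top"
    using eventually_gt_at_top[of 0] by eventually_elim (use assms n_pos in \<open>simp add: Kscaled_prob_le_1\<close>)
qed simp

subsection \<open>Upper bound\<close>

lemma eventually_Kscaled_prob_closed_ge_one:
  assumes "closed F" "\<forall>x\<in>F. b < rateI x"
  shows "eventually (\<lambda>\<theta>. Kscaled_prob \<theta> (n \<theta>) (speed \<theta>) (F \<inter> {1..}) \<le> exp (- b * speed \<theta>)) at_top"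
proof (cases "F \<inter> {1..} = {}")
  case True then show ?thesis by (simp add: Kscaled_prob_def)
next
  case False
  define x where "x = Inf (F \<inter> {1..})"
  have bdd: "bdd_below (F \<inter> {1..})" by (auto intro: bdd_belowI[of _ 1])
  have x: "x \<in> F \<inter> {1..}"
    unfolding x_def using False bdd assms(1) by (intro closed_contains_Inf closed_Int) auto
  have "x \<le> z" if "z \<in> F \<inter> {1..}" for z
    unfolding x_def by (rule cInf_lower[OF that bdd])
  then have "\<forall>z\<in>F \<inter> {1..}. 0 \<le> ln (x / 1) * (z - x)" using x by auto
  then show ?thesis
    using eventually_Kscaled_prob_le_exp[of 1 x "F \<inter> {1..}" b] x assms(2) by auto
qed

lemma eventually_Kscaled_prob_closed_le_one:
  assumes "closed F" "F \<subseteq> {0..}" "\<forall>x\<in>F. b < rateI x"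
  shows "eventually (\<lambda>\<theta>. Kscaled_prob \<theta> (n \<theta>) (speed \<theta>) (F \<inter> {..1}) \<le> exp (- b * speed \<theta>)) at_top"
proof (cases "F \<inter> {..1} = {}")
  case True then show ?thesis by (simp add: Kscaled_prob_def)
next
  case False
  define x where "x = Sup (F \<inter> {..1})"
  have bdd: "bdd_above (F \<inter> {..1})" by (auto intro: bdd_aboveI[of _ 1])
  have x: "x \<in> F \<inter> {..1}"
    unfolding x_def using False bdd assms(1) by (intro closed_contains_Sup closed_Int) auto
  have below: "z \<le> x" if "z \<in> F \<inter> {..1}" for z
    unfolding x_def by (rule cSup_upper[OF that bdd])
  show ?thesis
  proof (cases "x = 0")
    case True
    then show ?thesis
      using eventually_speed_ge below by (auto elim!: eventually_mono simp: Kscaled_prob_nonpos_eq_0)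
  next
    case False
    then have "0 < x" "ln x \<le> 0" using x assms(2) by auto
    then have "\<forall>z\<in>F \<inter> {..1}. 0 \<le> ln (x / 1) * (z - x)"
      using below by (auto intro: mult_nonpos_nonpos)
    then show ?thesis
      using eventually_Kscaled_prob_le_exp[of 1 x "F \<inter> {..1}" b] \<open>0 < x\<close> x assms(3) by auto
  qed
qed

lemma eventually_Kscaled_prob_closed_le:
  assumes "closed F" "F \<subseteq> {0..}" "\<forall>x\<in>F. b < rateI x"
  shows "eventually (\<lambda>\<theta>. Kscaled_prob \<theta> (n \<theta>) (speed \<theta>) F \<le> 2 * exp (- b * speed \<theta>)) at_top"
  using eventually_Kscaled_prob_closed_ge_one[OF assms(1,3)]
    eventually_Kscaled_prob_closed_le_one[OF assms] eventually_gt_at_top[of 0]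
proof eventually_elim
  case (elim \<theta>)
  have "F = (F \<inter> {1..}) \<union> (F \<inter> {..1})" by auto
  then have "Kscaled_prob \<theta> (n \<theta>) (speed \<theta>) F
      \<le> Kscaled_prob \<theta> (n \<theta>) (speed \<theta>) (F \<inter> {1..}) + Kscaled_prob \<theta> (n \<theta>) (speed \<theta>) (F \<inter> {..1})"
    using Kscaled_prob_Un[OF elim(3)] by metis
  then show ?case using elim by simp
qed

lemma ldp_upper_bound:
  assumes "closedin (top_of_set {0..}) F"
  shows "Limsup at_top (\<lambda>\<theta>. nlog (speed \<theta>) (Kscaled_prob \<theta> (n \<theta>) (speed \<theta>) F))
    \<le> - (INF x\<in>F. ereal (rateI x))"
proof (rule Limsup_nlog_le[OF speed_tendsto, where C = 2])
  fix b assume b: "ereal b < (INF x\<in>F. ereal (rateI x))"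
  have "\<forall>x\<in>F. b < rateI x"
    using b INF_lower[of _ F "\<lambda>x. ereal (rateI x)"] by (metis less_ereal.simps(1) order_less_le_trans)
  moreover have "closed F" "F \<subseteq> {0..}"
    using closedin_closed_trans[OF assms] closedin_imp_subset[OF assms] by auto
  ultimately show "eventually (\<lambda>\<theta>. Kscaled_prob \<theta> (n \<theta>) (speed \<theta>) F \<le> 2 * exp (- b * speed \<theta>)) at_top"
    by (intro eventually_Kscaled_prob_closed_le)
qed simp

subsection \<open>Lower bound\<close>

lemma eventually_ln_Kscaled_prob_window_gt:
  assumes "0 < \<delta>" "\<delta> < x" "c < - rateI x - \<delta> * \<bar>ln x\<bar>"
  shows "eventually (\<lambda>\<theta>. 0 < Kscaled_prob \<theta> (n \<theta>) (speed \<theta>) {x - \<delta><..<x + \<delta>}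
    \<and> c < ln (Kscaled_prob \<theta> (n \<theta>) (speed \<theta>) {x - \<delta><..<x + \<delta>}) / speed \<theta>) at_top"
proof -
  define W where "W = {x - \<delta><..<x + \<delta>}"
  define Q where "Q \<theta> = Kscaled_prob (x * \<theta>) (n \<theta>) (speed \<theta>) W" for \<theta>
  define C where "C = (x - 1)\<^sup>2 / min 1 x"
  define D where "D = x * ln x + \<delta> * \<bar>ln x\<bar>"
  define g where "g \<theta> = ln (Q \<theta>) * inverse (speed \<theta>) - D
    + ((x - 1) * (Kmean \<theta> (n \<theta>) / speed \<theta>) - C * (Ksum_sq \<theta> (n \<theta>) / speed \<theta>))" for \<theta>
  have Q: "(Q \<longlongrightarrow> 1) at_top"
    unfolding Q_def W_def using assms(1,2) by (rule Kscaled_prob_window_tendsto_1)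
  have "(g \<longlongrightarrow> ln 1 * 0 - D + ((x - 1) * 1 - C * 0)) at_top"
    unfolding g_def using Kmean_speed_tendsto[of 1]
    by (intro tendsto_intros Q tendsto_inverse_0_at_top speed_tendsto Ksum_sq_speed_tendsto) auto
  moreover have "ln 1 * 0 - D + ((x - 1) * 1 - C * 0) = - rateI x - \<delta> * \<bar>ln x\<bar>"
    by (simp add: D_def rateI_eq)
  ultimately have "eventually (\<lambda>\<theta>. c < g \<theta>) at_top"
    using assms(3) by (intro order_tendstoD(1)) auto
  moreover have "eventually (\<lambda>\<theta>. 0 < Q \<theta>) at_top"
    using Q by (rule order_tendstoD(1)) simp
  ultimately show ?thesis using eventually_speed_ge unfolding W_def[symmetric]
  proof eventually_elim
    case (elim \<theta>)
    then have pos: "0 < \<theta>" "0 < speed \<theta>" by auto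
    have x: "0 < x" using assms by simp
    have "\<forall>y\<in>W. \<bar>y - x\<bar> \<le> \<delta>" by (auto simp: W_def)
    note bound = ln_Kscaled_prob_ge_tilted[OF pos(1) x pos(2) this elim(2)[unfolded Q_def]]
    have "speed \<theta> * g \<theta> = ln (Q \<theta>) - D * speed \<theta> + ((x - 1) * Kmean \<theta> (n \<theta>) - C * Ksum_sq \<theta> (n \<theta>))"
      using pos unfolding g_def by (simp add: field_simps)
    moreover have "speed \<theta> * c < speed \<theta> * g \<theta>" using elim pos by simp
    ultimately have "c * speed \<theta> < ln (Kscaled_prob \<theta> (n \<theta>) (speed \<theta>) W)"
      using bound unfolding Q_def C_def D_def by (simp add: algebra_simps)
    then show ?case using bound pos by (simp add: pos_less_divide_eq)
  qed
qed

lemma eventually_ln_Kscaled_prob_open_gt: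
  assumes G: "openin (top_of_set {0..}) G" and "x \<in> G" "0 < x" "c < - rateI x"
  shows "eventually (\<lambda>\<theta>. 0 < Kscaled_prob \<theta> (n \<theta>) (speed \<theta>) G
    \<and> c < ln (Kscaled_prob \<theta> (n \<theta>) (speed \<theta>) G) / speed \<theta>) at_top"
proof -
  obtain r where r: "0 < r" "\<forall>y\<in>{0..}. dist y x < r \<longrightarrow> y \<in> G"
    using G \<open>x \<in> G\<close> unfolding openin_euclidean_subtopology_iff by blast
  define \<epsilon> where "\<epsilon> = - rateI x - c"
  define \<delta> where "\<delta> = min (min r x / 2) (\<epsilon> / (2 * (\<bar>ln x\<bar> + 1)))"
  have \<epsilon>: "0 < \<epsilon>" using assms by (simp add: \<epsilon>_def)
  have \<delta>: "0 < \<delta>" "\<delta> < x" "\<delta> < r" using r \<epsilon> \<open>0 < x\<close> by (auto simp: \<delta>_def)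
  have "\<delta> * (\<bar>ln x\<bar> + 1) \<le> \<epsilon> / (2 * (\<bar>ln x\<bar> + 1)) * (\<bar>ln x\<bar> + 1)"
    unfolding \<delta>_def by (intro mult_right_mono) auto
  also have "\<dots> = \<epsilon> / 2" by (simp add: field_simps)
  finally have "\<delta> * \<bar>ln x\<bar> < \<epsilon>" using \<delta> \<epsilon> by (simp add: algebra_simps)
  then have c: "c < - rateI x - \<delta> * \<bar>ln x\<bar>" by (simp add: \<epsilon>_def)
  have window: "{x - \<delta><..<x + \<delta>} \<subseteq> G"
    using r \<delta> by (auto simp: dist_real_def abs_less_iff)
  show ?thesis using eventually_ln_Kscaled_prob_window_gt[OF \<delta>(1,2) c] eventually_speed_ge
  proof eventually_elim
    case (elim \<theta>)
    then have pos: "0 < \<theta>" "0 < speed \<theta>" by auto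
    have "Kscaled_prob \<theta> (n \<theta>) (speed \<theta>) {x - \<delta><..<x + \<delta>} \<le> Kscaled_prob \<theta> (n \<theta>) (speed \<theta>) G"
      using Kscaled_prob_mono[OF pos(1) window] .
    moreover from this have "ln (Kscaled_prob \<theta> (n \<theta>) (speed \<theta>) {x - \<delta><..<x + \<delta>}) / speed \<theta>
        \<le> ln (Kscaled_prob \<theta> (n \<theta>) (speed \<theta>) G) / speed \<theta>"
      using elim pos by (intro divide_right_mono) auto
    ultimately show ?case using elim by linarith
  qed
qed

lemma ldp_lower_bound:
  assumes G: "openin (top_of_set {0..}) G"
  shows "- (INF x\<in>G. ereal (rateI x))
    \<le> Liminf at_top (\<lambda>\<theta>. nlog (speed \<theta>) (Kscaled_prob \<theta> (n \<theta>) (speed \<theta>) G))"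
proof -
  let ?L = "Liminf at_top (\<lambda>\<theta>. nlog (speed \<theta>) (Kscaled_prob \<theta> (n \<theta>) (speed \<theta>) G))"
  have interior_point: "ereal (- rateI x) \<le> ?L" if "x \<in> G" "0 < x" for x
    by (rule Liminf_nlog_ge) (rule eventually_ln_Kscaled_prob_open_gt[OF G that])
  have point: "- ereal (rateI x) \<le> ?L" if "x \<in> G" for x
  proof (cases "x = 0")
    case False
    then show ?thesis using interior_point[of x] that openin_imp_subset[OF G] by force
  next
    case True
    obtain r where r: "0 < r" "\<forall>y\<in>{0..}. dist y x < r \<longrightarrow> y \<in> G"
      using G \<open>x \<in> G\<close> unfolding openin_euclidean_subtopology_iff by blast
    define y where "y = min (r / 2) 1"
    have y: "y \<in> G" "0 < y" "y \<le> 1" using r True by (auto simp: y_def dist_real_def)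
    then have "- ereal (rateI x) \<le> ereal (- rateI y)" using rateI_le_one[of y] True by (simp add: rateI_def)
    then show ?thesis using interior_point[OF y(1,2)] by (rule order_trans)
  qed
  then have "- ?L \<le> (INF x\<in>G. ereal (rateI x))"
    by (intro INF_greatest) (simp add: ereal_uminus_le_reorder)
  then show ?thesis by (simp add: ereal_uminus_le_reorder)
qed

end

theorem theorem4p5:
  fixes n :: "real \<Rightarrow> nat"
  assumes "\<forall>\<theta>. n \<theta> > 0"
    and "filterlim n at_top at_top"
    and "((\<lambda>\<theta>. \<theta> / real (n \<theta>)) \<longlongrightarrow> 0) at_top"
  shows "LDP_at_top
           (\<lambda>\<theta> A. Kscaled_prob \<theta> (n \<theta>) (\<theta> * ln (real (n \<theta>) / \<theta>)) A)
           (\<lambda>\<theta>. \<theta> * ln (real (n \<theta>) / \<theta>))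
           rateI {0..}"
proof -
  interpret sampling_regime n
    using assms(1,3) by unfold_locales auto
  show ?thesis
    unfolding LDP_at_top_def speed_def[symmetric]
    using rateI_nonneg closedin_rateI_sublevel ldp_upper_bound ldp_lower_bound by auto
qed

end
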